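(* Let $X$ be an upper-bound unital commutative semiring. The following are equivalent: (1) $\mathcal{S}(X)$ is fully elementary; (2) $\mathcal{S}(X)$ is Frobenius; (3) $X=\{0\}$.
   Context: A semiring $(X,+,0,\cdot)$: $(X,+,0)$ commutative monoid, $(X,\cdot)$ semigroup, distributivity, $0$ absorbing. Intrinsic order: $a\le b$ iff $a+x=b$ for some $x$; upper-bound means this preorder is antisymmetric. $\mathcal{S}(X)=X\times X$ with $(a',a'')+(b',b'')=(a'+b',a''+b'')$, $(a',a'')\cdot(b',b'')=(a'b'+a''b'',a'b''+a''b')$; it is a unital commutative semiring with zero $(0,0)$ and unit $(1,0)$. A unital commutative semiring $Y$ is Frobenius if $(x+y)^n=x^n+y^n$ for all $x,y\in Y$, $n\ge1$. Polynomials over $Y$ in $n$ variables are functions $Y^n\to Y$ represented by formal expressions $\sum_k a_k\prod_j x_j^{d_{k,j}}$; symmetric if represented by an expression closed (with coefficients) under permuting variables. $e_j$ is the sum of all products of $j$ distinct variables. $Y$ is fully elementary if for every $n$ every symmetric polynomial in $n$ variables equals $r(e_1,\dots,e_n)$ as functions on $Y^n$ for some polynomial $r$. *)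

theory Defs
  imports Main "HOL-Combinatorics.Permutations"
begin

text \<open>A (not necessarily nontrivial) unital commutative semiring is modelled by the
sort {comm_semiring_0, comm_monoid_mult}: we deliberately avoid comm_semiring_1,
which contains the axiom 0 \<noteq> 1 and would exclude the zero semiring.\<close>

definition upper_bound :: "'a::comm_monoid_add itself \<Rightarrow> bool" where
  "upper_bound _ \<longleftrightarrow>
     (\<forall>a b::'a. (\<exists>x. a + x = b) \<and> (\<exists>y. b + y = a) \<longrightarrow> a = b)"

datatype 'a sx = SX 'a 'a

instantiation sx :: ("{comm_semiring_0,comm_monoid_mult}") "{comm_semiring_0,comm_monoid_mult}"
begin

fun plus_sx :: "'a sx \<Rightarrow> 'a sx \<Rightarrow> 'a sx" where
  "plus_sx (SX a1 a2) (SX b1 b2) = SX (a1 + b1) (a2 + b2)"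

fun times_sx :: "'a sx \<Rightarrow> 'a sx \<Rightarrow> 'a sx" where
  "times_sx (SX a1 a2) (SX b1 b2) = SX (a1 * b1 + a2 * b2) (a1 * b2 + a2 * b1)"

definition zero_sx :: "'a sx" where "zero_sx = SX 0 0"

definition one_sx :: "'a sx" where "one_sx = SX 1 0"

instance
proof
  fix a b c :: "'a sx"
  show "a + b + c = a + (b + c)"
    by (cases a; cases b; cases c) (simp add: add.assoc)
  show "a + b = b + a"
    by (cases a; cases b) (simp add: add.commute)
  show "0 + a = a"
    by (cases a) (simp add: zero_sx_def)
  show "a * b * c = a * (b * c)"
    by (cases a; cases b; cases c) (simp add: algebra_simps)
  show "a * b = b * a"
    by (cases a; cases b) (simp add: algebra_simps)
  show "(a + b) * c = a * c + b * c"
    by (cases a; cases b; cases c) (simp add: algebra_simps)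
  show "0 * a = 0"
    by (cases a) (simp add: zero_sx_def)
  show "a * 0 = 0"
    by (cases a) (simp add: zero_sx_def)
  show "1 * a = a"
    by (cases a) (simp add: one_sx_def)
qed

end

definition frobenius :: "'b::{comm_semiring_0,comm_monoid_mult} itself \<Rightarrow> bool" where
  "frobenius _ \<longleftrightarrow> (\<forall>(x::'b) y (n::nat). n \<ge> 1 \<longrightarrow> (x + y) ^ n = x ^ n + y ^ n)"

text \<open>Formal polynomial expressions in n variables x_0,...,x_{n-1} over Y: a coefficient
function on exponent vectors d :: nat \<Rightarrow> nat (d j = exponent of x_j), with finite support
and exponent vectors supported in {..<n}.\<close>
definition is_poly :: "nat \<Rightarrow> ((nat \<Rightarrow> nat) \<Rightarrow> 'b::zero) \<Rightarrow> bool" where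
  "is_poly n c \<longleftrightarrow> finite {d. c d \<noteq> 0} \<and> (\<forall>d. c d \<noteq> 0 \<longrightarrow> (\<forall>j\<ge>n. d j = 0))"

definition poly_eval :: "nat \<Rightarrow> ((nat \<Rightarrow> nat) \<Rightarrow> 'b::{comm_semiring_0,comm_monoid_mult})
    \<Rightarrow> (nat \<Rightarrow> 'b) \<Rightarrow> 'b" where
  "poly_eval n c x = (\<Sum>d\<in>{d. c d \<noteq> 0}. c d * (\<Prod>j<n. x j ^ d j))"

definition symmetric_poly :: "nat \<Rightarrow> ((nat \<Rightarrow> nat) \<Rightarrow> 'b::zero) \<Rightarrow> bool" where
  "symmetric_poly n c \<longleftrightarrow> (\<forall>\<sigma>. \<sigma> permutes {..<n} \<longrightarrow> (\<forall>d. c (d \<circ> \<sigma>) = c d))"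

definition elem_sym :: "nat \<Rightarrow> nat \<Rightarrow> (nat \<Rightarrow> 'b::{comm_semiring_0,comm_monoid_mult}) \<Rightarrow> 'b" where
  "elem_sym n k x = (\<Sum>S\<in>{S. S \<subseteq> {..<n} \<and> card S = k}. \<Prod>i\<in>S. x i)"

definition fully_elementary :: "'b::{comm_semiring_0,comm_monoid_mult} itself \<Rightarrow> bool" where
  "fully_elementary _ \<longleftrightarrow>
     (\<forall>n (c :: (nat \<Rightarrow> nat) \<Rightarrow> 'b). is_poly n c \<and> symmetric_poly n c \<longrightarrow>
        (\<exists>r :: (nat \<Rightarrow> nat) \<Rightarrow> 'b. is_poly n r \<and>
           (\<forall>x. poly_eval n c x = poly_eval n r (\<lambda>j. elem_sym n (Suc j) x))))"

end

theory Submission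
  imports Defs
begin

text \<open>In \<open>S(X)\<close> the element \<open>e = (0,1)\<close> satisfies \<open>e\<^sup>2 = 1\<close>, so \<open>(1 + e)\<^sup>2 = (2,2)\<close> while
\<open>1\<^sup>2 + e\<^sup>2 = (2,0)\<close>: Frobenius forces \<open>1 + 1 = 0\<close> in \<open>X\<close>, and in an upper-bound semiring
this means \<open>1 = 0\<close>. For full elementarity write \<open>x\<^sup>2 + y\<^sup>2 = r(x + y, x y)\<close>. At
\<open>(x,y) = (1,e)\<close> every monomial of \<open>r\<close> containing \<open>e\<^sub>1 = x + y = (1,1)\<close> evaluates to a diagonal
element \<open>(u,u)\<close>, while the left side \<open>(2,0)\<close> has second coordinate \<open>0\<close>; since sums in \<open>X\<close>
vanish only termwise, all those monomials vanish at \<open>(1,e)\<close>. Comparing \<open>(x,y) = ((1,1),0)\<close>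
with \<open>(0,0)\<close> then gives \<open>(1,1)\<^sup>2 = 0\<close>, i.e. again \<open>1 + 1 = 0\<close>.\<close>

lemma one_eq_zero_iff_all_zero: "(1::'a::{monoid_mult,mult_zero}) = 0 \<longleftrightarrow> (\<forall>x::'a. x = 0)"
  by (metis mult_1_right mult_zero_right)

lemma upper_bound_add_eq_0_left:
  assumes "upper_bound (X :: 'a::comm_monoid_add itself)" and "(a::'a) + b = 0"
  shows "a = 0"
  using assms unfolding upper_bound_def by (metis add_0)

lemma upper_bound_sum_eq_0:
  assumes ub: "upper_bound (X :: 'a::comm_monoid_add itself)"
    and "finite S" and "sum (f :: _ \<Rightarrow> 'a) S = 0" and "x \<in> S"
  shows "f x = 0"
  using assms(2-4)
proof (induction S rule: finite_induct)
  case (insert y F)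
  then have "f y + sum f F = 0" by simp
  then have "f y = 0" "sum f F = 0"
    using upper_bound_add_eq_0_left[OF ub] by (metis add.commute)+
  with insert show ?case by auto
qed simp

fun sx_snd :: "'a sx \<Rightarrow> 'a" where "sx_snd (SX a b) = b"

lemma sx_snd_add:
  "sx_snd (z + w) = sx_snd z + sx_snd (w :: 'a::{comm_semiring_0,comm_monoid_mult} sx)"
  by (cases z; cases w) simp

lemma sx_snd_sum:
  "sx_snd (sum f S) = (\<Sum>i\<in>S. sx_snd (f i :: 'a::{comm_semiring_0,comm_monoid_mult} sx))"
  using sum_comp_morphism[of sx_snd f S] by (simp add: zero_sx_def sx_snd_add o_def)

lemma sx_trivial:
  assumes "(1::'a::{comm_semiring_0,comm_monoid_mult}) = 0"
  shows "(z :: 'a sx) = w"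
proof -
  have "x = 0" for x :: 'a using assms one_eq_zero_iff_all_zero by blast
  then have "SX a b = (0 :: 'a sx)" for a b by (simp add: zero_sx_def)
  then show ?thesis by (metis sx.exhaust)
qed

text \<open>Multiplying by \<open>(1,1)\<close> lands in the diagonal \<open>{(u,u)}\<close>, which \<open>(0,1)\<close> fixes pointwise.\<close>
lemma diagonal_monomial:
  fixes z :: "'a::{comm_semiring_0,comm_monoid_mult} sx"
  assumes "0 < k"
  shows "\<exists>u. z * (SX 1 1 ^ k * SX 0 1 ^ m) = SX u u"
proof -
  have diag_t: "\<exists>u. w * SX 1 1 ^ Suc j = SX u u" for w :: "'a sx" and j
  proof (induction j arbitrary: w)
    case 0
    then show ?case by (cases w) auto
  next
    case (Suc j)
    have "w * SX 1 1 ^ Suc (Suc j) = (w * SX 1 1) * SX 1 1 ^ Suc j"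
      by (simp only: power_Suc mult.assoc)
    with Suc.IH show ?case by presburger
  qed
  have diag_e: "SX u u * SX 0 1 ^ m = (SX u u :: 'a sx)" for u
  proof (induction m)
    case (Suc m)
    have "SX u u * SX 0 1 ^ Suc m = (SX u u * SX 0 1) * SX 0 1 ^ m"
      by (simp only: power_Suc mult.assoc mult.commute[of "SX 0 1"])
    with Suc.IH show ?case by simp
  qed (simp add: one_sx_def)
  from assms obtain j where "k = Suc j" using gr0_implies_Suc by blast
  then obtain u where "z * SX 1 1 ^ k = SX u u" using diag_t by blast
  then have "z * (SX 1 1 ^ k * SX 0 1 ^ m) = SX u u"
    by (simp add: diag_e flip: mult.assoc)
  then show ?thesis ..
qed

lemma elem_sym_2_1: "elem_sym 2 1 x = x 0 + x 1"
proof -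
  have "{S. S \<subseteq> {..<2::nat} \<and> card S = 1} = {{0}, {1}}"
    by (auto simp: card_1_singleton_iff)
  then show ?thesis unfolding elem_sym_def by simp
qed

lemma elem_sym_2_2: "elem_sym 2 2 x = x 0 * x 1"
proof -
  have "S = {0, 1}" if "S \<subseteq> {..<2::nat}" and "card S = 2" for S
  proof -
    have "S = {..<2}" using that by (intro card_seteq) auto
    then show ?thesis by (auto simp: numeral_2_eq_2 lessThan_Suc)
  qed
  then have "{S. S \<subseteq> {..<2::nat} \<and> card S = 2} = {{0, 1}}" by auto
  then show ?thesis unfolding elem_sym_def by simp
qed

lemma poly_eval_2:
  "poly_eval 2 r x = (\<Sum>d | r d \<noteq> 0. r d * (x 0 ^ d 0 * x 1 ^ d 1))"
  unfolding poly_eval_def by (simp add: numeral_2_eq_2 lessThan_Suc ac_simps)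

text \<open>The coefficients of \<open>x\<^sub>0\<^sup>2 + x\<^sub>1\<^sup>2\<close>.\<close>
definition squares_coeff :: "(nat \<Rightarrow> nat) \<Rightarrow> 'b::{comm_semiring_0,comm_monoid_mult}" where
  "squares_coeff d = (if (\<forall>j\<ge>2. d j = 0) \<and> d 0 + d 1 = 2 \<and> d 0 * d 1 = 0 then 1 else 0)"

lemma pure_square_exponent_iff:
  fixes d :: "nat \<Rightarrow> nat"
  shows "((\<forall>j\<ge>2. d j = 0) \<and> d 0 + d 1 = 2 \<and> d 0 * d 1 = 0) \<longleftrightarrow>
     d = (\<lambda>j. if j = 0 then 2 else 0) \<or> d = (\<lambda>j. if j = 1 then 2 else 0)"
proof
  assume H: "(\<forall>j\<ge>2. d j = 0) \<and> d 0 + d 1 = 2 \<and> d 0 * d 1 = 0"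
  then have "d 0 = 2 \<and> d 1 = 0 \<or> d 0 = 0 \<and> d 1 = 2" by auto
  moreover have rest: "d j = 0" if "j \<noteq> 0" "j \<noteq> 1" for j
    using H that by (metis One_nat_def Suc_1 less_2_cases not_less)
  ultimately show "d = (\<lambda>j. if j = 0 then 2 else 0) \<or> d = (\<lambda>j. if j = 1 then 2 else 0)"
  proof (elim disjE)
    assume "d 0 = 2 \<and> d 1 = 0"
    then have "d j = (if j = 0 then 2 else 0)" for j
      using rest by (cases "j = 0"; cases "j = 1") simp_all
    then show ?thesis by blast
  next
    assume "d 0 = 0 \<and> d 1 = 2"
    then have "d j = (if j = 1 then 2 else 0)" for j
      using rest by (cases "j = 0"; cases "j = 1") simp_all
    then show ?thesis by blast
  qed
qed auto

lemma is_poly_squares_coeff: "is_poly 2 squares_coeff"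
  unfolding is_poly_def
proof
  have "{d. squares_coeff d \<noteq> 0}
          \<subseteq> {(\<lambda>j. if j = 0 then 2 else 0), (\<lambda>j. if j = 1 then 2 else 0)}"
    using pure_square_exponent_iff unfolding squares_coeff_def by auto
  then show "finite {d. squares_coeff d \<noteq> 0}" by (rule finite_subset) simp
qed (simp add: squares_coeff_def)

lemma permutes_lessThan_2:
  fixes \<sigma> :: "nat \<Rightarrow> nat"
  assumes "\<sigma> permutes {..<2}"
  shows "(\<sigma> 0 = 0 \<and> \<sigma> 1 = 1 \<or> \<sigma> 0 = 1 \<and> \<sigma> 1 = 0) \<and> (\<forall>j\<ge>2. \<sigma> j = j)"
proof -
  have "\<sigma> 0 < 2" "\<sigma> 1 < 2" using permutes_in_image[OF assms] by auto
  moreover have "\<sigma> 0 \<noteq> \<sigma> 1" using permutes_inj[OF assms] by (metis inj_eq zero_neq_one)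
  moreover have "\<forall>j\<ge>2. \<sigma> j = j" using permutes_not_in[OF assms] by auto
  ultimately show ?thesis by auto
qed

lemma symmetric_poly_squares_coeff: "symmetric_poly 2 squares_coeff"
  unfolding symmetric_poly_def
proof (intro allI impI)
  fix \<sigma> d :: "nat \<Rightarrow> nat"
  assume "\<sigma> permutes {..<2}"
  then have "\<sigma> 0 = 0 \<and> \<sigma> 1 = 1 \<or> \<sigma> 0 = 1 \<and> \<sigma> 1 = 0" "\<forall>j\<ge>2. \<sigma> j = j"
    using permutes_lessThan_2 by blast+
  then have "((\<forall>j\<ge>2. d (\<sigma> j) = 0) \<and> d (\<sigma> 0) + d (\<sigma> 1) = 2 \<and> d (\<sigma> 0) * d (\<sigma> 1) = 0)
      \<longleftrightarrow> ((\<forall>j\<ge>2. d j = 0) \<and> d 0 + d 1 = 2 \<and> d 0 * d 1 = 0)"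
    by (auto simp: add.commute mult.commute)
  then show "squares_coeff (d \<circ> \<sigma>) = squares_coeff d"
    unfolding squares_coeff_def by simp
qed

lemma poly_eval_squares_coeff:
  fixes x :: "nat \<Rightarrow> 'b::{comm_semiring_0,comm_monoid_mult}"
  shows "poly_eval 2 squares_coeff x = x 0 ^ 2 + x 1 ^ 2"
proof (cases "(1::'b) = 0")
  case True
  then show ?thesis using one_eq_zero_iff_all_zero by metis
next
  case False
  let ?D0 = "\<lambda>j::nat. if j = 0 then 2::nat else 0" and ?D1 = "\<lambda>j::nat. if j = 1 then 2::nat else 0"
  have "?D0 \<noteq> ?D1" by (auto dest: fun_cong[where x = 0])
  moreover have "{d. (squares_coeff d :: 'b) \<noteq> 0} = {?D0, ?D1}"
    using False pure_square_exponent_iff unfolding squares_coeff_def by auto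
  ultimately show ?thesis
    unfolding poly_eval_2 using pure_square_exponent_iff[of ?D0] pure_square_exponent_iff[of ?D1]
    by (simp add: squares_coeff_def)
qed

lemma fully_elementary_sum_of_squares:
  fixes Y :: "'b::{comm_semiring_0,comm_monoid_mult} itself"
  assumes "fully_elementary Y"
  obtains r :: "(nat \<Rightarrow> nat) \<Rightarrow> 'b" where "finite {d. r d \<noteq> 0}"
    and "\<And>x y. x ^ 2 + y ^ 2 = (\<Sum>d | r d \<noteq> 0. r d * ((x + y) ^ d 0 * (x * y) ^ d 1))"
proof -
  obtain r :: "(nat \<Rightarrow> nat) \<Rightarrow> 'b" where "is_poly 2 r"
    and r: "\<And>x. poly_eval 2 squares_coeff x = poly_eval 2 r (\<lambda>j. elem_sym 2 (Suc j) x)"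
    using assms is_poly_squares_coeff symmetric_poly_squares_coeff
    unfolding fully_elementary_def by blast
  moreover have "x ^ 2 + y ^ 2 = (\<Sum>d | r d \<noteq> 0. r d * ((x + y) ^ d 0 * (x * y) ^ d 1))" for x y
  proof -
    define xs where "xs = (\<lambda>j::nat. if j = 0 then x else y)"
    have "x ^ 2 + y ^ 2 = poly_eval 2 squares_coeff xs"
      by (simp add: poly_eval_squares_coeff xs_def)
    also have "\<dots> = poly_eval 2 r (\<lambda>j. elem_sym 2 (Suc j) xs)"
      by (rule r)
    also have "\<dots> = (\<Sum>d | r d \<noteq> 0. r d * ((x + y) ^ d 0 * (x * y) ^ d 1))"
      using elem_sym_2_1[of xs] elem_sym_2_2[of xs]
      by (simp add: poly_eval_2 xs_def flip: One_nat_def)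
    finally show ?thesis .
  qed
  ultimately show ?thesis using that unfolding is_poly_def by blast
qed

lemma fully_elementary_sx_imp_one_eq_zero:
  assumes ub: "upper_bound (X :: 'a::{comm_semiring_0,comm_monoid_mult} itself)"
    and "fully_elementary TYPE('a sx)"
  shows "(1::'a) = 0"
proof -
  obtain r :: "(nat \<Rightarrow> nat) \<Rightarrow> 'a sx" where fin: "finite {d. r d \<noteq> 0}"
    and r: "\<And>x y. x ^ 2 + y ^ 2 = (\<Sum>d | r d \<noteq> 0. r d * ((x + y) ^ d 0 * (x * y) ^ d 1))"
    using fully_elementary_sum_of_squares[OF assms(2)] by blast
  define S where "S = {d. r d \<noteq> 0}"
  define t where "t = SX (1::'a) 1"
  define e where "e = SX (0::'a) 1"
  have "(1 :: 'a sx) + e = t" "1 ^ 2 + e ^ 2 = SX (1 + 1) 0"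
    by (simp_all add: t_def e_def one_sx_def power2_eq_square)
  then have "SX (1 + 1) 0 = (\<Sum>d\<in>S. r d * (t ^ d 0 * e ^ d 1))"
    using r[of 1 e] unfolding S_def by (simp only: mult_1_left)
  from arg_cong[OF this, of sx_snd]
  have snd_zero: "(\<Sum>d\<in>S. sx_snd (r d * (t ^ d 0 * e ^ d 1))) = 0"
    by (simp add: sx_snd_sum)
  have vanish: "r d * t ^ d 0 = 0" if "0 < d 0" "d 1 = 0" for d
  proof (cases "d \<in> S")
    case True
    obtain u where u: "r d * (t ^ d 0 * e ^ d 1) = SX u u"
      using diagonal_monomial[OF \<open>0 < d 0\<close>] unfolding t_def e_def by blast
    with upper_bound_sum_eq_0[OF ub _ snd_zero True] fin have "u = 0" by (simp add: S_def)
    with u \<open>d 1 = 0\<close> show ?thesis by (simp add: zero_sx_def)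
  qed (simp add: S_def)
  have "t ^ 2 = (\<Sum>d\<in>S. r d * (t ^ d 0 * 0 ^ d 1))"
    using r[of t 0] unfolding S_def by (simp only: add_0_right mult_zero_right power2_eq_square[of 0])
  also have "\<dots> = (\<Sum>d\<in>S. r d * (0 ^ d 0 * 0 ^ d 1))"
  proof (rule sum.cong)
    fix d
    show "r d * (t ^ d 0 * 0 ^ d 1) = r d * (0 ^ d 0 * 0 ^ d 1)"
      using vanish[of d] by (cases "d 0"; cases "d 1") (simp_all add: mult.assoc[symmetric])
  qed simp
  also have "\<dots> = 0"
    using r[of 0 0] unfolding S_def by (simp only: add_0_right mult_zero_right power2_eq_square[of 0])
  finally have "(1::'a) + 1 = 0" by (simp add: t_def power2_eq_square zero_sx_def)
  then show ?thesis using upper_bound_add_eq_0_left[OF ub] by blast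
qed

lemma frobenius_sx_imp_one_eq_zero:
  assumes ub: "upper_bound (X :: 'a::{comm_semiring_0,comm_monoid_mult} itself)"
    and "frobenius TYPE('a sx)"
  shows "(1::'a) = 0"
proof -
  have "((1::'a sx) + SX 0 1) ^ 2 = 1 ^ 2 + SX 0 1 ^ 2"
    using assms(2) unfolding frobenius_def by auto
  then have "(1::'a) + 1 = 0" by (simp add: one_sx_def power2_eq_square)
  then show ?thesis using upper_bound_add_eq_0_left[OF ub] by blast
qed

theorem proposition6p1:
  fixes X :: "'a::{comm_semiring_0,comm_monoid_mult} itself"
  assumes "upper_bound X"
  shows "(fully_elementary TYPE('a sx) \<longleftrightarrow> frobenius TYPE('a sx))
       \<and> (frobenius TYPE('a sx) \<longleftrightarrow> (\<forall>x::'a. x = 0))"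
proof -
  have "frobenius TYPE('a sx)" if "(1::'a) = 0"
    unfolding frobenius_def using sx_trivial[OF that] by blast
  moreover have "fully_elementary TYPE('a sx)" if "(1::'a) = 0"
    unfolding fully_elementary_def
    by (intro allI impI exI[of _ "\<lambda>_. 0"]) (simp add: is_poly_def sx_trivial[OF that])
  ultimately show ?thesis
    using one_eq_zero_iff_all_zero fully_elementary_sx_imp_one_eq_zero[OF assms]
      frobenius_sx_imp_one_eq_zero[OF assms] by blast
qed

end
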